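(* Let $(X,\rho)$ be a complete locally compact $\mathbb R$-tree. For any two rooted orders $\sigma,\tau\in\mathcal O_+^r(X)$, the Hausdorff distance $\operatorname{Hd}(\sigma,\tau)$ (with respect to the sum metric $d_+$ on $X\times X$) is finite and equals $\rho(x,y)$, where $x$ is the root of $\tau$ and $y$ is the root of $\sigma$.
   Context: An $\mathbb R$-tree is a geodesic metric space in which any two points are joined by a unique segment and $[xy]\subset[xz]\cup[zy]$ for all $x,y,z$. $\mathcal O_+(X)$ is the set of partial orders $\tau$ on $X$ such that any two points have a supremum $x\vee y$, $x\,\tau\, z\,\tau\, y$ implies $\rho(x,z)+\rho(z,y)=\rho(x,y)$, $\rho(x,y)=\rho(x,x\vee y)+\rho(x\vee y,y)$ for all $x,y$, and every upper cone $\{y: x\,\tau\, y\}$ is linearly ordered. $\mathcal O_+^r(X)$ consists of those having a greatest element (root). Orders are regarded as subsets of $X\times X$ with metric $d_+((x_1,x_2),(y_1,y_2))=\rho(x_1,y_1)+\rho(x_2,y_2)$, and $\operatorname{Hd}(V,W)=\inf\{\varepsilon>0: V\subset\mathcal N_\varepsilon(W), W\subset\mathcal N_\varepsilon(V)\}$, $\mathcal N_\varepsilon$ denoting open $\varepsilon$-neighbourhoods in $d_+$. *)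

theory Defs
  imports "HOL-Analysis.Analysis" "HOL-Library.Extended_Real"
begin

definition is_segment :: "'a set \<Rightarrow> ('a \<Rightarrow> 'a \<Rightarrow> real) \<Rightarrow> 'a \<Rightarrow> 'a \<Rightarrow> 'a set \<Rightarrow> bool" where
  "is_segment X \<rho> x y S \<longleftrightarrow>
     (\<exists>\<gamma>. \<gamma> ` {0..\<rho> x y} = S \<and> S \<subseteq> X \<and> \<gamma> 0 = x \<and> \<gamma> (\<rho> x y) = y \<and>
          (\<forall>s\<in>{0..\<rho> x y}. \<forall>t\<in>{0..\<rho> x y}. \<rho> (\<gamma> s) (\<gamma> t) = \<bar>s - t\<bar>))"

definition segment :: "'a set \<Rightarrow> ('a \<Rightarrow> 'a \<Rightarrow> real) \<Rightarrow> 'a \<Rightarrow> 'a \<Rightarrow> 'a set" where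
  "segment X \<rho> x y = (THE S. is_segment X \<rho> x y S)"

definition R_tree :: "'a set \<Rightarrow> ('a \<Rightarrow> 'a \<Rightarrow> real) \<Rightarrow> bool" where
  "R_tree X \<rho> \<longleftrightarrow> Metric_space X \<rho> \<and>
     (\<forall>x\<in>X. \<forall>y\<in>X. \<exists>!S. is_segment X \<rho> x y S) \<and>
     (\<forall>x\<in>X. \<forall>y\<in>X. \<forall>z\<in>X. segment X \<rho> x y \<subseteq> segment X \<rho> x z \<union> segment X \<rho> z y)"

definition is_sup :: "'a set \<Rightarrow> ('a \<times> 'a) set \<Rightarrow> 'a \<Rightarrow> 'a \<Rightarrow> 'a \<Rightarrow> bool" where
  "is_sup X \<tau> x y s \<longleftrightarrow> s \<in> X \<and> (x, s) \<in> \<tau> \<and> (y, s) \<in> \<tau> \<and>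
     (\<forall>u\<in>X. (x, u) \<in> \<tau> \<and> (y, u) \<in> \<tau> \<longrightarrow> (s, u) \<in> \<tau>)"

definition sup_ord :: "'a set \<Rightarrow> ('a \<times> 'a) set \<Rightarrow> 'a \<Rightarrow> 'a \<Rightarrow> 'a" where
  "sup_ord X \<tau> x y = (THE s. is_sup X \<tau> x y s)"

definition O_plus :: "'a set \<Rightarrow> ('a \<Rightarrow> 'a \<Rightarrow> real) \<Rightarrow> ('a \<times> 'a) set set" where
  "O_plus X \<rho> = {\<tau>. \<tau> \<subseteq> X \<times> X \<and> refl_on X \<tau> \<and> antisym \<tau> \<and> trans \<tau> \<and>
     (\<forall>x\<in>X. \<forall>y\<in>X. \<exists>s. is_sup X \<tau> x y s) \<and>
     (\<forall>x\<in>X. \<forall>y\<in>X. \<forall>z\<in>X. (x, z) \<in> \<tau> \<and> (z, y) \<in> \<tau> \<longrightarrow> \<rho> x z + \<rho> z y = \<rho> x y) \<and>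
     (\<forall>x\<in>X. \<forall>y\<in>X. \<rho> x y = \<rho> x (sup_ord X \<tau> x y) + \<rho> (sup_ord X \<tau> x y) y) \<and>
     (\<forall>x\<in>X. total_on {y\<in>X. (x, y) \<in> \<tau>} \<tau>)}"

definition is_root :: "'a set \<Rightarrow> ('a \<times> 'a) set \<Rightarrow> 'a \<Rightarrow> bool" where
  "is_root X \<tau> r \<longleftrightarrow> r \<in> X \<and> (\<forall>x\<in>X. (x, r) \<in> \<tau>)"

definition root :: "'a set \<Rightarrow> ('a \<times> 'a) set \<Rightarrow> 'a" where
  "root X \<tau> = (THE r. is_root X \<tau> r)"

definition O_plus_r :: "'a set \<Rightarrow> ('a \<Rightarrow> 'a \<Rightarrow> real) \<Rightarrow> ('a \<times> 'a) set set" where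
  "O_plus_r X \<rho> = {\<tau> \<in> O_plus X \<rho>. \<exists>r. is_root X \<tau> r}"

definition d_plus :: "('a \<Rightarrow> 'a \<Rightarrow> real) \<Rightarrow> 'a \<times> 'a \<Rightarrow> 'a \<times> 'a \<Rightarrow> real" where
  "d_plus \<rho> p q = \<rho> (fst p) (fst q) + \<rho> (snd p) (snd q)"

definition nbhd :: "'a set \<Rightarrow> ('a \<Rightarrow> 'a \<Rightarrow> real) \<Rightarrow> real \<Rightarrow> ('a \<times> 'a) set \<Rightarrow> ('a \<times> 'a) set" where
  "nbhd X \<rho> \<epsilon> W = {p \<in> X \<times> X. \<exists>q\<in>W. d_plus \<rho> p q < \<epsilon>}"

text \<open>Hausdorff distance, valued in the extended reals (infimum of the empty set is \<infinity>).\<close>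
definition Hd :: "'a set \<Rightarrow> ('a \<Rightarrow> 'a \<Rightarrow> real) \<Rightarrow> ('a \<times> 'a) set \<Rightarrow> ('a \<times> 'a) set \<Rightarrow> ereal" where
  "Hd X \<rho> V W = Inf (ereal ` {\<epsilon>. \<epsilon> > 0 \<and> V \<subseteq> nbhd X \<rho> \<epsilon> W \<and> W \<subseteq> nbhd X \<rho> \<epsilon> V})"

end

theory Submission
  imports Defs
begin

text \<open>Let x and y be the roots of \<tau> and \<sigma>, and D = \<rho> x y. A pair (a, b) of \<sigma> is
  within D of the pair (a, a \<or> b) of \<tau> (supremum in \<tau>): the geodesic identities of the two
  orders along a \<le> b \<le> y and a, b \<le> a \<or> b \<le> x, combined with two triangle inequalities
  through x and y, give \<rho> b (a \<or> b) \<le> D. Conversely, for the pair (x, y) of \<sigma>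
  and any (a, b) of \<tau> one has \<rho> x b \<le> \<rho> x a because b lies between a and x, so
  d_plus (x, y) (a, b) \<ge> \<rho> x b + \<rho> b y \<ge> D. Hence the admissible \<epsilon> in the
  Hausdorff distance are exactly those above D.\<close>

lemma is_root_root:
  assumes "\<tau> \<in> O_plus_r X \<rho>"
  shows "is_root X \<tau> (root X \<tau>)"
proof -
  obtain r where r: "is_root X \<tau> r" and "antisym \<tau>"
    using assms unfolding O_plus_r_def O_plus_def by auto
  then have "\<And>r'. is_root X \<tau> r' \<Longrightarrow> r' = r"
    unfolding is_root_def antisym_def by blast
  with r have "root X \<tau> = r"
    unfolding root_def by (rule the_equality)
  with r show ?thesis by simp
qed

lemma sup_ord_eqI:
  assumes "\<tau> \<in> O_plus X \<rho>" and m: "is_sup X \<tau> a b m"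
  shows "sup_ord X \<tau> a b = m"
proof -
  have "antisym \<tau>" using assms(1) unfolding O_plus_def by auto
  with m have "\<And>m'. is_sup X \<tau> a b m' \<Longrightarrow> m' = m"
    unfolding is_sup_def antisym_def by blast
  with m show ?thesis
    unfolding sup_ord_def by (rule the_equality)
qed

lemma O_plus_subset: "\<tau> \<in> O_plus X \<rho> \<Longrightarrow> \<tau> \<subseteq> X \<times> X"
  unfolding O_plus_def by auto

lemma O_plus_dist_between:
  assumes "\<tau> \<in> O_plus X \<rho>" and "(u, w) \<in> \<tau>" and "(w, v) \<in> \<tau>"
  shows "\<rho> u w + \<rho> w v = \<rho> u v"
proof -
  have "u \<in> X" "w \<in> X" "v \<in> X"
    using assms O_plus_subset by blast+
  with assms show ?thesis unfolding O_plus_def by blast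
qed

lemma O_plus_obtain_sup:
  assumes "\<tau> \<in> O_plus X \<rho>" and "a \<in> X" and "b \<in> X"
  obtains m where "m \<in> X" and "(a, m) \<in> \<tau>" and "(b, m) \<in> \<tau>" and "\<rho> a b = \<rho> a m + \<rho> m b"
proof -
  obtain m where m: "is_sup X \<tau> a b m"
    using assms unfolding O_plus_def by blast
  then have "\<rho> a b = \<rho> a m + \<rho> m b"
    using assms sup_ord_eqI[OF assms(1) m] unfolding O_plus_def by auto
  with m that show ?thesis unfolding is_sup_def by blast
qed

lemma rooted_orders_pair_near:
  assumes M: "Metric_space X \<rho>" and \<sigma>: "\<sigma> \<in> O_plus X \<rho>" and \<tau>: "\<tau> \<in> O_plus X \<rho>"
    and y: "is_root X \<sigma> y" and x: "is_root X \<tau> x" and ab: "(a, b) \<in> \<sigma>"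
  shows "\<exists>q\<in>\<tau>. d_plus \<rho> (a, b) q \<le> \<rho> x y"
proof -
  have X: "a \<in> X" "b \<in> X" "x \<in> X" "y \<in> X"
    using ab O_plus_subset[OF \<sigma>] x y unfolding is_root_def by auto
  obtain m where "m \<in> X" and am: "(a, m) \<in> \<tau>" and bm: "(b, m) \<in> \<tau>"
    and split_ab: "\<rho> a b = \<rho> a m + \<rho> m b"
    using O_plus_obtain_sup[OF \<tau> X(1,2)] .
  have "(m, x) \<in> \<tau>" and "(b, y) \<in> \<sigma>"
    using x y \<open>m \<in> X\<close> X unfolding is_root_def by auto
  then have "\<rho> a m + \<rho> m x = \<rho> a x" and "\<rho> b m + \<rho> m x = \<rho> b x"
    and "\<rho> a b + \<rho> b y = \<rho> a y"
    using O_plus_dist_between[OF \<tau> am] O_plus_dist_between[OF \<tau> bm]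
      O_plus_dist_between[OF \<sigma> ab] by auto
  moreover have "\<rho> b x \<le> \<rho> b y + \<rho> y x" and "\<rho> a y \<le> \<rho> a x + \<rho> x y"
    using X Metric_space.triangle[OF M] by blast+
  ultimately have "\<rho> b m \<le> \<rho> x y"
    using split_ab Metric_space.commute[OF M, of m b] Metric_space.commute[OF M, of y x]
    by linarith
  moreover have "\<rho> a a = 0"
    using X by (simp add: Metric_space.zero[OF M])
  ultimately have "d_plus \<rho> (a, b) (a, m) \<le> \<rho> x y"
    unfolding d_plus_def by simp
  with am show ?thesis by blast
qed

lemma root_pair_far:
  assumes M: "Metric_space X \<rho>" and \<tau>: "\<tau> \<in> O_plus X \<rho>"
    and x: "is_root X \<tau> x" and "y \<in> X" and ab: "(a, b) \<in> \<tau>"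
  shows "\<rho> x y \<le> d_plus \<rho> (x, y) (a, b)"
proof -
  have X: "a \<in> X" "b \<in> X" "x \<in> X"
    using ab O_plus_subset[OF \<tau>] x unfolding is_root_def by auto
  then have "(b, x) \<in> \<tau>" using x unfolding is_root_def by auto
  then have "\<rho> a b + \<rho> b x = \<rho> a x"
    using O_plus_dist_between[OF \<tau> ab] by blast
  moreover have "\<rho> x y \<le> \<rho> x b + \<rho> b y"
    using M X \<open>y \<in> X\<close> by (simp add: Metric_space.triangle)
  ultimately show ?thesis
    using Metric_space.nonneg[OF M, of a b] Metric_space.commute[OF M, of x a]
      Metric_space.commute[OF M, of x b] Metric_space.commute[OF M, of b y]
    unfolding d_plus_def by simp
qed

lemma ereal_image_greaterThan: "ereal ` {D<..} = {ereal D<..<\<infinity>}"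
  apply (auto simp: image_iff)
  subgoal for x by (cases x) auto
  done

lemma subset_nbhdI:
  assumes "V \<subseteq> X \<times> X" and "\<And>p. p \<in> V \<Longrightarrow> \<exists>q\<in>W. d_plus \<rho> p q \<le> D" and "D < \<epsilon>"
  shows "V \<subseteq> nbhd X \<rho> \<epsilon> W"
proof
  fix p assume "p \<in> V"
  with assms(2) obtain q where "q \<in> W" and "d_plus \<rho> p q \<le> D" by blast
  moreover have "p \<in> X \<times> X" using \<open>p \<in> V\<close> assms(1) by blast
  ultimately show "p \<in> nbhd X \<rho> \<epsilon> W"
    using \<open>D < \<epsilon>\<close> unfolding nbhd_def by force
qed

lemma Hd_eqI:
  assumes "V \<subseteq> X \<times> X" and "W \<subseteq> X \<times> X" and "0 \<le> D"
    and VW: "\<And>p. p \<in> V \<Longrightarrow> \<exists>q\<in>W. d_plus \<rho> p q \<le> D"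
    and WV: "\<And>q. q \<in> W \<Longrightarrow> \<exists>p\<in>V. d_plus \<rho> q p \<le> D"
    and "p\<^sub>0 \<in> V" and far: "\<And>q. q \<in> W \<Longrightarrow> D \<le> d_plus \<rho> p\<^sub>0 q"
  shows "Hd X \<rho> V W = ereal D"
proof -
  have "{\<epsilon>. \<epsilon> > 0 \<and> V \<subseteq> nbhd X \<rho> \<epsilon> W \<and> W \<subseteq> nbhd X \<rho> \<epsilon> V} = {D<..}"
  proof (intro set_eqI iffI)
    fix \<epsilon> assume "\<epsilon> \<in> {\<epsilon>. \<epsilon> > 0 \<and> V \<subseteq> nbhd X \<rho> \<epsilon> W \<and> W \<subseteq> nbhd X \<rho> \<epsilon> V}"
    with \<open>p\<^sub>0 \<in> V\<close> obtain q where "q \<in> W" and "d_plus \<rho> p\<^sub>0 q < \<epsilon>"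
      unfolding nbhd_def by blast
    with far have "D < \<epsilon>" by (meson order_le_less_trans)
    then show "\<epsilon> \<in> {D<..}" by simp
  next
    fix \<epsilon> assume "\<epsilon> \<in> {D<..}"
    then have "D < \<epsilon>" by simp
    have "V \<subseteq> nbhd X \<rho> \<epsilon> W" and "W \<subseteq> nbhd X \<rho> \<epsilon> V"
      using subset_nbhdI assms(1,2) VW WV \<open>D < \<epsilon>\<close> by blast+
    then show "\<epsilon> \<in> {\<epsilon>. \<epsilon> > 0 \<and> V \<subseteq> nbhd X \<rho> \<epsilon> W \<and> W \<subseteq> nbhd X \<rho> \<epsilon> V}"
      using \<open>0 \<le> D\<close> \<open>D < \<epsilon>\<close> by simp
  qed
  then show ?thesis
    unfolding Hd_def by (simp add: ereal_image_greaterThan)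
qed

theorem lemma1:
  fixes X :: "'a set" and \<rho> :: "'a \<Rightarrow> 'a \<Rightarrow> real" and \<sigma> \<tau> :: "('a \<times> 'a) set"
  assumes "R_tree X \<rho>"
    and "Metric_space.mcomplete X \<rho>"
    and "locally_compact_space (Metric_space.mtopology X \<rho>)"
    and "\<sigma> \<in> O_plus_r X \<rho>" and "\<tau> \<in> O_plus_r X \<rho>"
  shows "Hd X \<rho> \<sigma> \<tau> < \<infinity> \<and> Hd X \<rho> \<sigma> \<tau> = ereal (\<rho> (root X \<tau>) (root X \<sigma>))"
proof -
  have M: "Metric_space X \<rho>" using assms(1) unfolding R_tree_def by auto
  have \<sigma>: "\<sigma> \<in> O_plus X \<rho>" and \<tau>: "\<tau> \<in> O_plus X \<rho>"
    using assms(4,5) unfolding O_plus_r_def by auto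
  define x y where "x = root X \<tau>" and "y = root X \<sigma>"
  have x: "is_root X \<tau> x" and y: "is_root X \<sigma> y"
    unfolding x_def y_def using is_root_root assms(4,5) by blast+
  then have "x \<in> X" "y \<in> X" unfolding is_root_def by auto
  have "Hd X \<rho> \<sigma> \<tau> = ereal (\<rho> x y)"
  proof (rule Hd_eqI[OF O_plus_subset[OF \<sigma>] O_plus_subset[OF \<tau>]])
    show "0 \<le> \<rho> x y" using M by (simp add: Metric_space.nonneg)
    show "\<exists>q\<in>\<tau>. d_plus \<rho> p q \<le> \<rho> x y" if "p \<in> \<sigma>" for p
      using rooted_orders_pair_near[OF M \<sigma> \<tau> y x] that by (cases p) blast
    show "\<exists>p\<in>\<sigma>. d_plus \<rho> q p \<le> \<rho> x y" if "q \<in> \<tau>" for q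
      using rooted_orders_pair_near[OF M \<tau> \<sigma> x y] that Metric_space.commute[OF M, of x y]
      by (cases q) auto
    show "(x, y) \<in> \<sigma>" using y \<open>x \<in> X\<close> unfolding is_root_def by auto
    show "\<rho> x y \<le> d_plus \<rho> (x, y) q" if "q \<in> \<tau>" for q
      using root_pair_far[OF M \<tau> x \<open>y \<in> X\<close>] that by (cases q) blast
  qed
  then show ?thesis unfolding x_def y_def by simp
qed

end
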